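(* Let $n \ge 4$ and let $\frac{a_1}{b_1} < \frac{a_2}{b_2} < \cdots$ be the Farey sequence of order $n$. Let $f(n)$ be the largest integer such that $(a_l - a_k)(b_l - b_k) \ge 0$ for all indices $k, l$ with $|l-k| \le f(n)$. Then $$f(n) \le \left\lfloor \frac{n}{4} \right\rfloor + d,$$ where $d = 1, 2, 2, 4$ according as $n \equiv 0, 1, 2, 3 \pmod 4$.
   Context: The Farey sequence of order $n$ is the increasing list of all reduced fractions $\frac{a}{b}$ with $0 \le \frac{a}{b} \le 1$ and $1 \le b \le n$ (including $\frac01$ and $\frac11$), each written in lowest terms. Two fractions $\frac{a}{b}, \frac{a'}{b'}$ (in lowest terms) are called similarly ordered if $(a'-a)(b'-b) \ge 0$. For $n \ge 4$ the Farey sequence of order $n$ contains two fractions that are not similarly ordered, so $f(n)$ is well defined. *)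

theory Defs
  imports Complex_Main "HOL-Library.Product_Lexorder"
begin

text \<open>Indexing is 0-based (irrelevant for the statement, which only uses index differences).\<close>
definition farey :: "nat \<Rightarrow> (nat \<times> nat) list" where
  "farey n = sort_key (\<lambda>(a,b). (of_nat a / of_nat b :: rat))
     (sorted_list_of_set {(a,b). 1 \<le> b \<and> b \<le> n \<and> a \<le> b \<and> coprime a b})"

definition similarly_ordered :: "nat \<times> nat \<Rightarrow> nat \<times> nat \<Rightarrow> bool" where
  "similarly_ordered p q \<longleftrightarrow>
     (int (fst q) - int (fst p)) * (int (snd q) - int (snd p)) \<ge> 0"

definition farey_f :: "nat \<Rightarrow> nat" where
  "farey_f n = (GREATEST m. \<forall>k < length (farey n). \<forall>l < length (farey n).
      nat \<bar>int l - int k\<bar> \<le> m \<longrightarrow> similarly_ordered (farey n ! k) (farey n ! l))"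

definition farey_d :: "nat \<Rightarrow> nat" where
  "farey_d n = (if n mod 4 = 0 then 1 else if n mod 4 = 1 then 2
                else if n mod 4 = 2 then 2 else 4)"

end

(*
  If two Farey fractions p < q at positions k < l are not similarly ordered, then f(n) < l - k,
  and l - k is the number of Farey fractions in (p, q].  For n = 4t + 4 take
  p = (2t+1)/(4t+4), q = (2t+2)/(4t+3); for n = 4t + r with r = 1, 2, 3 take
  p = 2t/(4t+1), q = (2t+1)/(4t), except for n = 7, where that interval is too long and
  p = 1/6, q = 2/5 are used instead.  Both intervals lie within 1/(4t) of 1/2, so writing
  a/b = 1/2 + e/(2b) with e = 2a - b leaves only -1 <= e <= 2: besides 1/2 and at most two
  other fractions, (p, q] only contains fractions a/(2a+1) (resp. a/(2a-1)) for about t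
  values of a.
*)
theory Submission
  imports Defs
begin

definition farey_set :: "nat \<Rightarrow> (nat \<times> nat) set" where
  "farey_set n = {(a, b). 1 \<le> b \<and> b \<le> n \<and> a \<le> b \<and> coprime a b}"

definition rat_of_pair :: "nat \<times> nat \<Rightarrow> rat" where
  "rat_of_pair = (\<lambda>(a, b). of_nat a / of_nat b)"

definition farey_between :: "nat \<Rightarrow> nat \<times> nat \<Rightarrow> nat \<times> nat \<Rightarrow> (nat \<times> nat) set" where
  "farey_between n p q =
     {x \<in> farey_set n. rat_of_pair p < rat_of_pair x \<and> rat_of_pair x \<le> rat_of_pair q}"

lemma finite_farey_set: "finite (farey_set n)"
proof (rule finite_subset)
  show "farey_set n \<subseteq> {0..n} \<times> {0..n}" by (auto simp: farey_set_def)
qed simp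

lemma farey_eq_sort_key: "farey n = sort_key rat_of_pair (sorted_list_of_set (farey_set n))"
  unfolding farey_def farey_set_def rat_of_pair_def by simp

lemma set_farey: "set (farey n) = farey_set n"
  by (simp add: farey_eq_sort_key finite_farey_set)

lemma inj_on_rat_of_pair: "inj_on rat_of_pair (farey_set n)"
proof (rule inj_onI)
  fix x y assume "x \<in> farey_set n" "y \<in> farey_set n" "rat_of_pair x = rat_of_pair y"
  moreover obtain a b c d where "x = (a, b)" "y = (c, d)" by fastforce
  ultimately have "a * d = c * b" "b \<noteq> 0" "d \<noteq> 0" "coprime a b" "coprime c d"
    by (auto simp: farey_set_def rat_of_pair_def field_simps simp flip: of_nat_mult)
  then show "x = y"
    using coprime_crossproduct_nat[of a b c d] \<open>x = (a, b)\<close> \<open>y = (c, d)\<close> by simp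
qed

lemma sorted_wrt_farey: "sorted_wrt (\<lambda>x y. rat_of_pair x < rat_of_pair y) (farey n)"
proof -
  have "distinct (farey n)"
    by (simp add: farey_eq_sort_key)
  then have "distinct (map rat_of_pair (farey n))"
    using inj_on_rat_of_pair by (simp add: distinct_map set_farey)
  moreover have "sorted (map rat_of_pair (farey n))"
    by (simp add: farey_eq_sort_key)
  ultimately show ?thesis by (simp add: strict_sorted_iff flip: sorted_wrt_map)
qed

lemma card_between_nth:
  fixes f :: "'a \<Rightarrow> 'b :: order"
  assumes sorted: "sorted_wrt (\<lambda>x y. f x < f y) xs" and "k \<le> l" "l < length xs"
  shows "card {x \<in> set xs. f (xs ! k) < f x \<and> f x \<le> f (xs ! l)} = l - k"
proof -
  have less_iff: "f (xs ! i) < f (xs ! j) \<longleftrightarrow> i < j" if "i < length xs" "j < length xs" for i j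
    using sorted_wrt_nth_less[OF sorted, of i j] sorted_wrt_nth_less[OF sorted, of j i] that
    by (cases i j rule: linorder_cases) auto
  have "{x \<in> set xs. f (xs ! k) < f x \<and> f x \<le> f (xs ! l)} = (nth xs) ` {k<..l}"
    (is "?S = _")
  proof (intro equalityI subsetI)
    fix x assume "x \<in> ?S"
    then obtain j where "j < length xs" "x = xs ! j" "f (xs ! k) < f (xs ! j)" "f (xs ! j) \<le> f (xs ! l)"
      by (auto simp: in_set_conv_nth)
    then have "k < j" "j \<le> l"
      using less_iff[of k j] less_iff[of l j] assms(2,3) by (auto simp: not_less[symmetric])
    then show "x \<in> (nth xs) ` {k<..l}"
      using \<open>x = xs ! j\<close> by simp
  next
    fix x assume "x \<in> (nth xs) ` {k<..l}"
    then obtain j where "k < j" "j \<le> l" "x = xs ! j"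
      by auto
    then show "x \<in> ?S"
      using less_iff[of k j] less_iff[of j l] assms(3) by (auto simp: order_le_less)
  qed
  moreover have "inj_on (nth xs) {k<..l}"
  proof (rule inj_onI)
    fix i j assume "i \<in> {k<..l}" "j \<in> {k<..l}" "xs ! i = xs ! j"
    then show "i = j"
      using less_iff[of i j] less_iff[of j i] assms(3) by auto
  qed
  ultimately show ?thesis by (simp add: card_image)
qed

lemma farey_f_less_index_distance:
  assumes "k < l" "l < length (farey n)" and not_sim: "\<not> similarly_ordered (farey n ! k) (farey n ! l)"
  shows "farey_f n < l - k"
proof -
  define P where "P m \<longleftrightarrow> (\<forall>k < length (farey n). \<forall>l < length (farey n).
      nat \<bar>int l - int k\<bar> \<le> m \<longrightarrow> similarly_ordered (farey n ! k) (farey n ! l))" for m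
  have bound: "m < l - k" if "P m" for m
  proof (rule ccontr)
    assume "\<not> m < l - k"
    then have "similarly_ordered (farey n ! k) (farey n ! l)"
      using \<open>P m\<close> assms(1,2) unfolding P_def by (metis order.strict_trans nat_abs_int_diff not_less)
    with not_sim show False ..
  qed
  have "P 0" by (auto simp: P_def similarly_ordered_def)
  then have "P (Greatest P)"
    using bound by (intro GreatestI_nat[of P 0 "l - k"]) (auto simp: less_imp_le)
  then show ?thesis
    using bound by (simp add: farey_f_def P_def[abs_def])
qed

lemma farey_f_less_card_between:
  assumes "p \<in> farey_set n" "q \<in> farey_set n" "rat_of_pair p < rat_of_pair q"
    and "\<not> similarly_ordered p q"
  shows "farey_f n < card (farey_between n p q)"
proof -
  obtain k l where kl: "k < length (farey n)" "farey n ! k = p" "l < length (farey n)" "farey n ! l = q"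
    using assms(1,2) by (metis set_farey in_set_conv_nth)
  have "k < l"
    using sorted_wrt_farey[of n] kl assms(3)
    by (metis linorder_neqE_nat order.asym sorted_wrt_nth_less)
  then have "farey_f n < l - k"
    using farey_f_less_index_distance kl assms(4) by blast
  also have "l - k = card (farey_between n p q)"
    using card_between_nth[OF sorted_wrt_farey, of k l n] \<open>k < l\<close> kl
    by (simp add: farey_between_def set_farey)
  finally show ?thesis .
qed

lemma rat_of_pair_less_iff:
  "0 < b \<Longrightarrow> 0 < d \<Longrightarrow> rat_of_pair (a, b) < rat_of_pair (c, d) \<longleftrightarrow> a * d < c * b"
  by (simp add: rat_of_pair_def field_simps flip: of_nat_mult)

lemma rat_of_pair_le_iff:
  "0 < b \<Longrightarrow> 0 < d \<Longrightarrow> rat_of_pair (a, b) \<le> rat_of_pair (c, d) \<longleftrightarrow> a * d \<le> c * b"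
  by (simp add: rat_of_pair_def field_simps flip: of_nat_mult)

lemma coprime_if_mult_eq_mult_plus_1:
  fixes a b :: nat
  assumes "u * a = v * b + 1"
  shows "coprime a b"
proof -
  have "gcd a b dvd v * b + 1"
    by (metis assms dvd_mult gcd_dvd1)
  moreover have "gcd a b dvd v * b"
    by simp
  ultimately have "gcd a b dvd 1"
    using dvd_add_right_iff by blast
  then show ?thesis
    by (simp add: coprime_iff_gcd_eq_1)
qed

lemma mem_farey_between_iff:
  assumes "0 < d" "0 < d'"
  shows "(a, b) \<in> farey_between n (c, d) (c', d') \<longleftrightarrow>
    (a, b) \<in> farey_set n \<and> c * b < a * d \<and> a * d' \<le> c' * b"
proof (cases "(a, b) \<in> farey_set n")
  case True
  then have "0 < b" by (simp add: farey_set_def)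
  with True assms show ?thesis
    by (simp add: farey_between_def rat_of_pair_less_iff rat_of_pair_le_iff)
qed (simp add: farey_between_def)

lemma near_half_cases_mod4_eq_0:
  fixes a b t :: nat
  assumes "b \<le> 4*t + 4" "coprime a b"
    and "(2*t + 1) * b < a * (4*t + 4)" "a * (4*t + 3) \<le> (2*t + 2) * b"
  shows "a = 1 \<and> b = 2 \<or> a = 2*t + 2 \<and> b = 4*t + 3 \<or> b = 2*a + 1 \<and> t < a \<and> a \<le> 2*t + 1"
proof -
  define e where "e = 2 * int a - int b"
  have "int ((2*t + 1) * b) < int (a * (4*t + 4))" "int (a * (4*t + 3)) \<le> int ((2*t + 2) * b)"
    using assms(3,4) by (simp_all only: of_nat_less_iff of_nat_le_iff)
  then have lower: "- int b < e * (2 * int t + 2)" and upper: "e * (4 * int t + 3) \<le> int b"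
    unfolding e_def by (simp_all add: algebra_simps)
  have bound: "int b \<le> 4 * int t + 4"
    using assms(1) by simp
  consider "e \<le> -2" | "e = -1" | "e = 0" | "e = 1" | "e \<ge> 2"
    by linarith
  then show ?thesis
  proof cases
    case 1
    then have "e * (2 * int t + 2) \<le> -2 * (2 * int t + 2)"
      by (intro mult_right_mono) auto
    with lower bound show ?thesis
      by (simp add: algebra_simps)
  next
    case 2
    then show ?thesis
      using lower bound by (auto simp: e_def)
  next
    case 3
    then have "b = 2*a" by (simp add: e_def)
    then show ?thesis
      using assms(2) by auto
  next
    case 4
    then have "b + 1 = 2*a" "4*t + 3 \<le> b"
      using upper by (simp_all add: e_def)
    then show ?thesis
      using assms(1) by presburger
  next
    case 5
    then have "2 * (4 * int t + 3) \<le> e * (4 * int t + 3)"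
      by (intro mult_right_mono) auto
    with upper bound show ?thesis
      by (simp add: algebra_simps)
  qed
qed

lemma near_half_cases_mod4_ne_0:
  fixes a b t r :: nat
  assumes "1 \<le> t" "r \<le> 3" "(t, r) \<noteq> (1, 3)" "b \<le> 4*t + r" "coprime a b"
    and "2*t * b < a * (4*t + 1)" "a * (4*t) \<le> (2*t + 1) * b"
  shows "a = 1 \<and> b = 2 \<or> a = 2*t + 1 \<and> b = 4*t \<or> a = 2*t + 1 \<and> b = 4*t + 3 \<and> r = 3
    \<or> b + 1 = 2*a \<and> t < a \<and> 2*a \<le> 4*t + r + 1"
proof -
  define e where "e = 2 * int a - int b"
  have "int (2*t * b) < int (a * (4*t + 1))" "int (a * (4*t)) \<le> int ((2*t + 1) * b)"
    using assms(6,7) by (simp_all only: of_nat_less_iff of_nat_le_iff)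
  then have lower: "- int b < e * (4 * int t + 1)" and upper: "e * (2 * int t) \<le> int b"
    unfolding e_def by (simp_all add: algebra_simps)
  have bound: "int b \<le> 4 * int t + int r"
    using assms(4) by simp
  consider "e \<le> -2" | "e = -1" | "e = 0" | "e = 1" | "e = 2" | "e \<ge> 3"
    by linarith
  then show ?thesis
  proof cases
    case 1
    then have "e * (4 * int t + 1) \<le> -2 * (4 * int t + 1)"
      by (intro mult_right_mono) auto
    with lower bound assms(1,2) show ?thesis
      by (simp add: algebra_simps)
  next
    case 2
    then have "b = 2*a + 1" "4*t + 1 < b"
      using lower by (simp_all add: e_def)
    then show ?thesis
      using assms(2,4) by presburger
  next
    case 3
    then have "b = 2*a" by (simp add: e_def)
    then show ?thesis
      using assms(5) by auto
  next
    case 4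
    then show ?thesis
      using upper assms(4) by (simp add: e_def)
  next
    case 5
    then have "b + 2 = 2*a" "4*t \<le> b"
      using upper by (simp_all add: e_def)
    then have "b = 4*t \<or> b = 4*t + 2 \<and> a = 2*t + 2"
      using assms(2,4) by presburger
    moreover have "\<not> (2 dvd a \<and> 2 dvd b)"
      using coprime_common_divisor_nat[OF assms(5), of 2] by auto
    ultimately show ?thesis
      using \<open>b + 2 = 2*a\<close> by auto
  next
    case 6
    then have "3 * (2 * int t) \<le> e * (2 * int t)"
      by (intro mult_right_mono) auto
    with upper have "6 * t \<le> b"
      by linarith
    then have "t = 1" "b = 6"
      using assms(1-4) by auto
    with upper 6 have "2 * a = 9"
      by (simp add: e_def)
    then show ?thesis
      by presburger
  qed
qed
lemma farey_between_subset_mod4_eq_0: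
  "farey_between (4*t + 4) (2*t + 1, 4*t + 4) (2*t + 2, 4*t + 3)
     \<subseteq> {(1, 2), (2*t + 2, 4*t + 3)} \<union> (\<lambda>a. (a, 2*a + 1)) ` {t<..2*t + 1}"
proof (rule subrelI)
  fix a b assume "(a, b) \<in> farey_between (4*t + 4) (2*t + 1, 4*t + 4) (2*t + 2, 4*t + 3)"
  then show "(a, b) \<in> {(1, 2), (2*t + 2, 4*t + 3)} \<union> (\<lambda>a. (a, 2*a + 1)) ` {t<..2*t + 1}"
    using near_half_cases_mod4_eq_0[of b t a] by (auto simp: mem_farey_between_iff farey_set_def)
qed

lemma farey_between_subset_mod4_ne_0:
  assumes "1 \<le> t" "r \<le> 3" "(t, r) \<noteq> (1, 3)"
  shows "farey_between (4*t + r) (2*t, 4*t + 1) (2*t + 1, 4*t)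
     \<subseteq> {(1, 2), (2*t + 1, 4*t)} \<union> (if r = 3 then {(2*t + 1, 4*t + 3)} else {})
       \<union> (\<lambda>a. (a, 2*a - 1)) ` {t<..(4*t + r + 1) div 2}"
proof (rule subrelI)
  fix a b assume "(a, b) \<in> farey_between (4*t + r) (2*t, 4*t + 1) (2*t + 1, 4*t)"
  then have "a = 1 \<and> b = 2 \<or> a = 2*t + 1 \<and> b = 4*t \<or> a = 2*t + 1 \<and> b = 4*t + 3 \<and> r = 3
    \<or> b + 1 = 2*a \<and> t < a \<and> 2*a \<le> 4*t + r + 1"
    using assms near_half_cases_mod4_ne_0[of t r b a] by (simp add: mem_farey_between_iff farey_set_def)
  then show "(a, b) \<in> {(1, 2), (2*t + 1, 4*t)} \<union> (if r = 3 then {(2*t + 1, 4*t + 3)} else {})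
       \<union> (\<lambda>a. (a, 2*a - 1)) ` {t<..(4*t + r + 1) div 2}"
    by (auto intro!: image_eqI[of _ _ a])
qed

lemma farey_between_subset_7:
  "farey_between 7 (1, 6) (2, 5) \<subseteq> {(1, 5), (1, 4), (2, 7), (1, 3), (2, 5)}"
proof (rule subrelI)
  fix a b assume "(a, b) \<in> farey_between 7 (1, 6) (2, 5)"
  then have b: "b \<le> 7" "coprime a b" "b < a * 6" "a * 5 \<le> 2 * b"
    by (simp_all add: mem_farey_between_iff farey_set_def)
  then have "(a = 1 \<and> 3 \<le> b \<and> b \<le> 5) \<or> (a = 2 \<and> 5 \<le> b \<and> b \<le> 7)"
    using b(1) by presburger
  moreover have "(a, b) \<noteq> (2, 6)"
    using b(2) by auto
  ultimately show "(a, b) \<in> {(1, 5), (1, 4), (2, 7), (1, 3), (2, 5)}"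
    by auto
qed

lemma farey_f_mod4_eq_0_le: "farey_f (4*t + 4) \<le> t + 2"
proof -
  have "coprime (4*t + 4) (2*t + 1)"
    by (rule coprime_if_mult_eq_mult_plus_1[of "t + 1" _ "2*t + 3"]) (simp add: algebra_simps)
  then have "(2*t + 1, 4*t + 4) \<in> farey_set (4*t + 4)"
    by (simp add: farey_set_def coprime_commute)
  moreover have "coprime (2*t + 2) (4*t + 3)"
    by (rule coprime_if_mult_eq_mult_plus_1[of 2 _ 1]) simp
  then have "(2*t + 2, 4*t + 3) \<in> farey_set (4*t + 4)"
    by (simp add: farey_set_def)
  ultimately have "farey_f (4*t + 4) < card (farey_between (4*t + 4) (2*t + 1, 4*t + 4) (2*t + 2, 4*t + 3))"
    by (intro farey_f_less_card_between)
       (auto simp: rat_of_pair_less_iff similarly_ordered_def algebra_simps)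
  also have "\<dots> \<le> card ({(1::nat, 2::nat), (2*t + 2, 4*t + 3)} \<union> (\<lambda>a. (a, 2*a + 1)) ` {t<..2*t + 1})"
    by (intro card_mono farey_between_subset_mod4_eq_0) auto
  also have "\<dots> \<le> 2 + (t + 1)"
    by (intro card_Un_le[THEN order_trans] add_mono card_image_le[THEN order_trans])
       (auto simp: card_insert_if)
  finally show ?thesis by simp
qed

lemma farey_f_mod4_ne_0_le:
  assumes "1 \<le> t" "1 \<le> r" "r \<le> 3" "(t, r) \<noteq> (1, 3)"
  shows "farey_f (4*t + r) \<le> t + farey_d (4*t + r)"
proof -
  have "coprime (4*t + 1) (2*t)"
    by (rule coprime_if_mult_eq_mult_plus_1[of 1 _ 2]) simp
  then have "(2*t, 4*t + 1) \<in> farey_set (4*t + r)"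
    using assms(2) by (simp add: farey_set_def coprime_commute)
  moreover have "coprime (2*t + 1) (4*t)"
    by (rule coprime_if_mult_eq_mult_plus_1[of "2*t + 1" _ "t + 1"]) (simp add: algebra_simps)
  then have "(2*t + 1, 4*t) \<in> farey_set (4*t + r)"
    using assms(1) by (simp add: farey_set_def)
  ultimately have "farey_f (4*t + r) < card (farey_between (4*t + r) (2*t, 4*t + 1) (2*t + 1, 4*t))"
    using assms(1)
    by (intro farey_f_less_card_between)
       (auto simp: rat_of_pair_less_iff similarly_ordered_def algebra_simps)
  also have "\<dots> \<le> card ({(1::nat, 2::nat), (2*t + 1, 4*t)} \<union> (if r = 3 then {(2*t + 1, 4*t + 3)} else {})
       \<union> (\<lambda>a. (a, 2*a - 1)) ` {t<..(4*t + r + 1) div 2})"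
    using assms by (intro card_mono farey_between_subset_mod4_ne_0) auto
  also have "\<dots> \<le> 2 + (if r = 3 then 1 else 0) + ((4*t + r + 1) div 2 - t)"
    by (intro card_Un_le[THEN order_trans] add_mono card_image_le[THEN order_trans])
       (auto simp: card_insert_if)
  finally show ?thesis
    using assms(2,3) by (auto simp: farey_d_def)
qed

lemma farey_f_7_le: "farey_f 7 \<le> 4"
proof -
  have "farey_f 7 < card (farey_between 7 (1, 6) (2, 5))"
    by (intro farey_f_less_card_between)
       (auto simp: farey_set_def rat_of_pair_less_iff similarly_ordered_def)
  also have "\<dots> \<le> card {(1::nat, 5::nat), (1, 4), (2, 7), (1, 3), (2, 5)}"
    by (intro card_mono farey_between_subset_7) auto
  finally show ?thesis by simp
qed

theorem theorem1:
  fixes n :: nat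
  assumes "n \<ge> 4"
  shows "farey_f n \<le> n div 4 + farey_d n"
proof -
  define t r where "t = n div 4" and "r = n mod 4"
  then have n: "n = 4*t + r" and "r < 4" "1 \<le> t"
    using assms by auto
  consider "r = 0" | "t = 1" "r = 3" | "1 \<le> r" "(t, r) \<noteq> (1, 3)"
    by fastforce
  then show ?thesis
  proof cases
    case 1
    obtain s where "t = Suc s"
      using \<open>1 \<le> t\<close> by (cases t) auto
    then have "n = 4*s + 4"
      using n 1 by simp
    then show ?thesis
      using farey_f_mod4_eq_0_le[of s] by (simp add: farey_d_def)
  next
    case 2
    then show ?thesis
      using farey_f_7_le n by (simp add: farey_d_def)
  next
    case 3
    then show ?thesis
      using farey_f_mod4_ne_0_le[of t r] n \<open>r < 4\<close> \<open>1 \<le> t\<close> by simp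
  qed
qed

end
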